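(* Let $W_n$ be the wheel graph on $n\geq 4$ vertices, i.e. a cycle on $n-1$ vertices together with one additional vertex adjacent to all of them. Let $c_0:V(W_n)\to\mathbb{Z}$ be any initial chip configuration. Then the sequence of configurations $(c_t)_{t\ge0}$ produced by the diffusion process is eventually periodic, i.e. there exist $t\geq 0$ and $p\geq 1$ with $c_{t+p}=c_t$.
   Context: Diffusion process: for a finite simple graph $G$ and a chip configuration $c_t:V(G)\to\mathbb{Z}$ (negative values allowed), the next configuration is defined simultaneously for every vertex $u$ by $c_{t+1}(u)=c_t(u)-|\{w\in N(u): c_t(u)>c_t(w)\}|+|\{w\in N(u): c_t(u)<c_t(w)\}|$. *)

theory Defs
  imports Main
begin

(* A finite simple graph is given by a vertex set V and a symmetric irreflexive
   adjacency relation E.  Neighbourhood of u: N(u) = {w \<in> V. E u w}. *)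

definition diffusion_step :: "'a set \<Rightarrow> ('a \<Rightarrow> 'a \<Rightarrow> bool) \<Rightarrow> ('a \<Rightarrow> int) \<Rightarrow> ('a \<Rightarrow> int)" where
  "diffusion_step V E c = (\<lambda>u.
     c u - int (card {w \<in> V. E u w \<and> c u > c w})
         + int (card {w \<in> V. E u w \<and> c u < c w}))"

definition diffusion :: "'a set \<Rightarrow> ('a \<Rightarrow> 'a \<Rightarrow> bool) \<Rightarrow> ('a \<Rightarrow> int) \<Rightarrow> nat \<Rightarrow> ('a \<Rightarrow> int)" where
  "diffusion V E c0 t = (diffusion_step V E ^^ t) c0"

(* Wheel graph W_n on vertex set {0..<n}: vertex 0 is the hub, adjacent to all
   others; vertices 1..n-1 form a cycle 1 - 2 - ... - (n-1) - 1. *)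
definition wheel_V :: "nat \<Rightarrow> nat set" where
  "wheel_V n = {0..<n}"

definition wheel_E :: "nat \<Rightarrow> nat \<Rightarrow> nat \<Rightarrow> bool" where
  "wheel_E n u w \<longleftrightarrow> u < n \<and> w < n \<and> u \<noteq> w \<and>
     (u = 0 \<or> w = 0 \<or>
      (u \<noteq> 0 \<and> w \<noteq> 0 \<and> ((u mod (n - 1)) + 1 = w \<or> (w mod (n - 1)) + 1 = u)))"

end

theory Submission
  imports Defs "HOL-Library.FuncSet"
begin

text \<open>The flow along an edge is antisymmetric, so the chip total is conserved, and the
  quadratic energy \<open>\<Sum>\<^sub>u c(u)\<^sup>2\<close> drops in one step by the total variation
  \<open>\<Sum>\<^sub>u \<Sum>\<^sub>w |c(u) - c(w)|\<close> (over adjacent \<open>u, w\<close>), up to an additive error \<open>|V|\<^sup>3\<close>.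
  If some vertex is adjacent to all others, a small total variation forces every value to lie
  near the conserved average, so the energy stays bounded along the whole orbit. Only finitely
  many configurations then occur, and by pigeonhole one of them recurs.\<close>

definition diffusion_flow :: "'a set \<Rightarrow> ('a \<Rightarrow> 'a \<Rightarrow> bool) \<Rightarrow> ('a \<Rightarrow> int) \<Rightarrow> 'a \<Rightarrow> int" where
  "diffusion_flow V E c u = (\<Sum>w\<in>V. if E u w then sgn (c w - c u) else 0)"

definition total_variation :: "'a set \<Rightarrow> ('a \<Rightarrow> 'a \<Rightarrow> bool) \<Rightarrow> ('a \<Rightarrow> int) \<Rightarrow> int" where
  "total_variation V E c = (\<Sum>u\<in>V. \<Sum>w\<in>V. if E u w then \<bar>c u - c w\<bar> else 0)"

lemma diffusion_step_eq_flow: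
  assumes "finite V"
  shows "diffusion_step V E c u = c u + diffusion_flow V E c u"
proof -
  have "diffusion_flow V E c u =
      (\<Sum>w\<in>V. (if E u w \<and> c u < c w then 1 else 0) - (if E u w \<and> c u > c w then 1 else 0))"
    unfolding diffusion_flow_def by (rule sum.cong) (auto simp: sgn_if)
  also have "\<dots> = int (card {w \<in> V. E u w \<and> c u < c w}) - int (card {w \<in> V. E u w \<and> c u > c w})"
    using assms by (simp add: sum_subtractf sum.inter_filter[symmetric])
  finally show ?thesis unfolding diffusion_step_def by simp
qed

lemma diffusion_Suc:
  assumes "finite V"
  shows "diffusion V E c0 (Suc t) u = diffusion V E c0 t u + diffusion_flow V E (diffusion V E c0 t) u"
  using diffusion_step_eq_flow[OF assms] by (simp add: diffusion_def)

lemma sum_diffusion_flow: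
  fixes E :: "'a \<Rightarrow> 'a \<Rightarrow> bool" and c :: "'a \<Rightarrow> int"
  assumes "finite V" and sym: "\<And>u w. E u w \<Longrightarrow> E w u"
  shows "(\<Sum>u\<in>V. diffusion_flow V E c u) = 0"
proof -
  let ?f = "\<lambda>u w. if E u w then sgn (c w - c u) else (0::int)"
  have "(\<Sum>u\<in>V. \<Sum>w\<in>V. ?f u w) = (\<Sum>w\<in>V. \<Sum>u\<in>V. ?f u w)" by (rule sum.swap)
  also have "\<dots> = (\<Sum>w\<in>V. \<Sum>u\<in>V. - ?f w u)"
    using sym by (intro sum.cong refl) (auto simp: sgn_if)
  also have "\<dots> = - (\<Sum>w\<in>V. \<Sum>u\<in>V. ?f w u)" by (simp add: sum_negf)
  finally show ?thesis unfolding diffusion_flow_def by simp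
qed

lemma sum_diffusion:
  fixes E :: "'a \<Rightarrow> 'a \<Rightarrow> bool" and c0 :: "'a \<Rightarrow> int"
  assumes "finite V" and "\<And>u w. E u w \<Longrightarrow> E w u"
  shows "(\<Sum>u\<in>V. diffusion V E c0 t u) = (\<Sum>u\<in>V. c0 u)"
proof (induction t)
  case 0
  show ?case by (simp add: diffusion_def)
next
  case (Suc t)
  then show ?case
    using sum_diffusion_flow[where E=E, OF assms]
    by (simp add: diffusion_Suc[OF assms(1)] sum.distrib)
qed

lemma sum_mult_diffusion_flow:
  fixes E :: "'a \<Rightarrow> 'a \<Rightarrow> bool" and c :: "'a \<Rightarrow> int"
  assumes "finite V" and sym: "\<And>u w. E u w \<Longrightarrow> E w u"
  shows "2 * (\<Sum>u\<in>V. c u * diffusion_flow V E c u) = - total_variation V E c"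
proof -
  let ?g = "\<lambda>u w. if E u w then c u * sgn (c w - c u) else (0::int)"
  have expand: "(\<Sum>u\<in>V. c u * diffusion_flow V E c u) = (\<Sum>u\<in>V. \<Sum>w\<in>V. ?g u w)"
    unfolding diffusion_flow_def by (simp add: sum_distrib_left if_distrib cong: if_cong)
  have "(\<Sum>u\<in>V. \<Sum>w\<in>V. ?g u w) = (\<Sum>w\<in>V. \<Sum>u\<in>V. ?g u w)" by (rule sum.swap)
  then have "2 * (\<Sum>u\<in>V. \<Sum>w\<in>V. ?g u w) = (\<Sum>u\<in>V. \<Sum>w\<in>V. ?g u w + ?g w u)"
    by (simp add: sum.distrib)
  also have "\<dots> = (\<Sum>u\<in>V. \<Sum>w\<in>V. - (if E u w then \<bar>c u - c w\<bar> else 0))"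
    using sym by (intro sum.cong refl) (auto simp: sgn_if abs_if)
  finally show ?thesis unfolding expand total_variation_def by (simp add: sum_negf)
qed

lemma abs_diffusion_flow_le:
  assumes "finite V"
  shows "\<bar>diffusion_flow V E c u\<bar> \<le> int (card V)"
proof -
  have "\<bar>diffusion_flow V E c u\<bar> \<le> (\<Sum>w\<in>V. \<bar>if E u w then sgn (c w - c u) else 0\<bar>)"
    unfolding diffusion_flow_def by (rule sum_abs)
  also have "\<dots> \<le> (\<Sum>w\<in>V. 1)" by (rule sum_mono) (auto simp: abs_sgn_eq)
  finally show ?thesis by simp
qed

lemma total_variation_nonneg: "total_variation V E c \<ge> 0"
  unfolding total_variation_def by (intro sum_nonneg) auto

lemma sum_square_diffusion_step_le:
  fixes E :: "'a \<Rightarrow> 'a \<Rightarrow> bool" and c :: "'a \<Rightarrow> int"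
  assumes "finite V" and "\<And>u w. E u w \<Longrightarrow> E w u"
  shows "(\<Sum>u\<in>V. (diffusion_step V E c u)\<^sup>2)
           \<le> (\<Sum>u\<in>V. (c u)\<^sup>2) - total_variation V E c + int (card V) ^ 3"
proof -
  let ?d = "diffusion_flow V E c"
  have "(\<Sum>u\<in>V. (diffusion_step V E c u)\<^sup>2)
          = (\<Sum>u\<in>V. (c u)\<^sup>2) + 2 * (\<Sum>u\<in>V. c u * ?d u) + (\<Sum>u\<in>V. (?d u)\<^sup>2)"
    by (simp add: diffusion_step_eq_flow[OF assms(1)] power2_sum sum.distrib
        sum_distrib_left mult.assoc)
  moreover have "(\<Sum>u\<in>V. (?d u)\<^sup>2) \<le> (\<Sum>u\<in>V. (int (card V))\<^sup>2)"
  proof (rule sum_mono)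
    fix u
    have "\<bar>?d u\<bar>\<^sup>2 \<le> (int (card V))\<^sup>2"
      by (rule power_mono[OF abs_diffusion_flow_le[OF assms(1)]]) simp
    then show "(?d u)\<^sup>2 \<le> (int (card V))\<^sup>2" by simp
  qed
  moreover have "(\<Sum>u\<in>V. (int (card V))\<^sup>2) = int (card V) ^ 3"
    by (simp add: power2_eq_square power3_eq_cube)
  ultimately show ?thesis
    using sum_mult_diffusion_flow[where E=E and c=c, OF assms] by linarith
qed

lemma sum_abs_diff_dominating_le_total_variation:
  fixes E :: "'a \<Rightarrow> 'a \<Rightarrow> bool" and c :: "'a \<Rightarrow> int"
  assumes "finite V" and "z \<in> V" and dom: "\<And>u. u \<in> V \<Longrightarrow> u \<noteq> z \<Longrightarrow> E u z"
  shows "(\<Sum>u\<in>V. \<bar>c u - c z\<bar>) \<le> total_variation V E c"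
  unfolding total_variation_def
proof (rule sum_mono)
  fix u assume "u \<in> V"
  show "\<bar>c u - c z\<bar> \<le> (\<Sum>w\<in>V. if E u w then \<bar>c u - c w\<bar> else 0)"
  proof (cases "u = z")
    case False
    have "(if E u z then \<bar>c u - c z\<bar> else 0) \<le> (\<Sum>w\<in>V. if E u w then \<bar>c u - c w\<bar> else 0)"
      using assms(1,2) by (intro member_le_sum) auto
    with dom[OF \<open>u \<in> V\<close> False] show ?thesis by simp
  qed (simp add: sum_nonneg)
qed

lemma abs_le_sum_plus_total_variation:
  fixes E :: "'a \<Rightarrow> 'a \<Rightarrow> bool" and c :: "'a \<Rightarrow> int"
  assumes "finite V" and "z \<in> V" and "\<And>u. u \<in> V \<Longrightarrow> u \<noteq> z \<Longrightarrow> E u z" and "u \<in> V"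
  shows "\<bar>c u\<bar> \<le> \<bar>\<Sum>w\<in>V. c w\<bar> + 2 * total_variation V E c"
proof -
  let ?D = "total_variation V E c"
  have spread: "(\<Sum>w\<in>V. \<bar>c w - c z\<bar>) \<le> ?D"
    by (rule sum_abs_diff_dominating_le_total_variation[where E=E and c=c, OF assms(1-3)])
  have "\<bar>c u - c z\<bar> \<le> (\<Sum>w\<in>V. \<bar>c w - c z\<bar>)"
    using assms(1,4) by (intro member_le_sum) auto
  then have near_z: "\<bar>c u - c z\<bar> \<le> ?D" using spread by linarith
  have "int (card V) * c z - (\<Sum>w\<in>V. c w) = (\<Sum>w\<in>V. c z - c w)"
    by (simp add: sum_subtractf)
  also have "\<bar>\<dots>\<bar> \<le> (\<Sum>w\<in>V. \<bar>c w - c z\<bar>)"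
    by (metis (no_types, lifting) abs_minus_commute sum.cong sum_abs)
  finally have "\<bar>int (card V) * c z\<bar> \<le> \<bar>\<Sum>w\<in>V. c w\<bar> + ?D" using spread by linarith
  moreover have "\<bar>c z\<bar> \<le> \<bar>int (card V) * c z\<bar>"
    using assms(1,2) card_gt_0_iff[of V] by (auto simp: abs_mult mult_le_cancel_right1)
  ultimately show ?thesis using near_z by linarith
qed

lemma diffusion_sum_square_bounded:
  fixes E :: "'a \<Rightarrow> 'a \<Rightarrow> bool" and c0 :: "'a \<Rightarrow> int"
  assumes fin: "finite V" and sym: "\<And>u w. E u w \<Longrightarrow> E w u"
    and "z \<in> V" and "\<And>u. u \<in> V \<Longrightarrow> u \<noteq> z \<Longrightarrow> E u z"
  shows "\<exists>K. \<forall>t. (\<Sum>u\<in>V. (diffusion V E c0 t u)\<^sup>2) \<le> K"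
proof -
  define c where "c = diffusion V E c0"
  define S where "S = (\<Sum>u\<in>V. c0 u)"
  define R where "R = int (card V) ^ 3"
  define En where "En t = (\<Sum>u\<in>V. (c t u)\<^sup>2)" for t
  have step: "En (Suc t) \<le> En t - total_variation V E (c t) + R" for t
    using sum_square_diffusion_step_le[where E=E and c="c t", OF fin sym]
    by (simp add: En_def R_def c_def diffusion_def)
  have small: "En t \<le> int (card V) * (\<bar>S\<bar> + 2 * R)\<^sup>2" if "total_variation V E (c t) < R" for t
  proof -
    have "(c t u)\<^sup>2 \<le> (\<bar>S\<bar> + 2 * R)\<^sup>2" if "u \<in> V" for u
    proof -
      have "\<bar>c t u\<bar> \<le> \<bar>S\<bar> + 2 * total_variation V E (c t)"
        using abs_le_sum_plus_total_variation[where E=E and c="c t", OF fin assms(3,4) that]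
          sum_diffusion[where E=E, OF fin sym] by (simp add: c_def S_def)
      then have "\<bar>c t u\<bar> \<le> \<bar>S\<bar> + 2 * R" using \<open>total_variation V E (c t) < R\<close> by linarith
      then have "\<bar>c t u\<bar>\<^sup>2 \<le> (\<bar>S\<bar> + 2 * R)\<^sup>2" by (rule power_mono) simp
      then show ?thesis by simp
    qed
    then have "En t \<le> (\<Sum>u\<in>V. (\<bar>S\<bar> + 2 * R)\<^sup>2)" unfolding En_def by (rule sum_mono)
    then show ?thesis by simp
  qed
  define K where "K = max (En 0) (int (card V) * (\<bar>S\<bar> + 2 * R)\<^sup>2 + R)"
  have "En t \<le> K" for t
  proof (induction t)
    case (Suc t)
    show ?case
    proof (cases "total_variation V E (c t) < R")
      case True
      then show ?thesis
        using step[of t] small[of t] total_variation_nonneg[of V E "c t"]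
        by (simp add: K_def)
    qed (use step[of t] Suc in linarith)
  qed (simp add: K_def)
  then show ?thesis by (auto simp: En_def c_def)
qed

lemma abs_le_square_int: "\<bar>x::int\<bar> \<le> x\<^sup>2"
proof (cases "x = 0")
  case False
  then have "\<bar>x\<bar> * 1 \<le> \<bar>x\<bar> * \<bar>x\<bar>" by (intro mult_left_mono) auto
  then show ?thesis by (simp add: power2_eq_square abs_mult_self_eq)
qed simp

lemma diffusion_bounded:
  fixes E :: "'a \<Rightarrow> 'a \<Rightarrow> bool" and c0 :: "'a \<Rightarrow> int"
  assumes "finite V" and "\<And>u w. E u w \<Longrightarrow> E w u"
    and "z \<in> V" and "\<And>u. u \<in> V \<Longrightarrow> u \<noteq> z \<Longrightarrow> E u z"
  shows "\<exists>K. \<forall>t. \<forall>u\<in>V. \<bar>diffusion V E c0 t u\<bar> \<le> K"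
proof -
  obtain K where K: "\<And>t. (\<Sum>u\<in>V. (diffusion V E c0 t u)\<^sup>2) \<le> K"
    using diffusion_sum_square_bounded[where E=E, OF assms] by blast
  have "\<bar>diffusion V E c0 t u\<bar> \<le> K" if "u \<in> V" for t u
  proof -
    have "(diffusion V E c0 t u)\<^sup>2 \<le> (\<Sum>u\<in>V. (diffusion V E c0 t u)\<^sup>2)"
      using assms(1) that by (intro member_le_sum) auto
    then show ?thesis using K[of t] abs_le_square_int[of "diffusion V E c0 t u"] by linarith
  qed
  then show ?thesis by blast
qed

lemma bounded_sequence_recurs:
  fixes f :: "nat \<Rightarrow> 'a \<Rightarrow> int"
  assumes "finite V" and bounded: "\<And>t u. u \<in> V \<Longrightarrow> \<bar>f t u\<bar> \<le> K"
  shows "\<exists>t p. p \<ge> 1 \<and> (\<forall>v\<in>V. f (t + p) v = f t v)"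
proof -
  define g where "g t = restrict (f t) V" for t
  have "range g \<subseteq> PiE V (\<lambda>_. {-K..K})"
  proof (clarsimp simp: g_def)
    fix t u assume "u \<in> V"
    then show "-K \<le> f t u \<and> f t u \<le> K" using bounded[of u t] by linarith
  qed
  moreover have "finite (PiE V (\<lambda>_. {-K..K}))"
    using assms(1) by (intro finite_PiE) auto
  ultimately have "\<not> inj g"
    using finite_subset finite_imageD infinite_UNIV_nat by blast
  then obtain t1 t2 where "t1 < t2" and "g t1 = g t2"
    unfolding inj_def by (metis linorder_neqE_nat)
  then have "\<forall>v\<in>V. f (t1 + (t2 - t1)) v = f t1 v"
    unfolding g_def by (metis le_add_diff_inverse less_imp_le restrict_apply')
  with \<open>t1 < t2\<close> show ?thesis by (intro exI[of _ t1] exI[of _ "t2 - t1"]) auto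
qed

lemma wheel_E_sym: "wheel_E n u w \<Longrightarrow> wheel_E n w u"
  unfolding wheel_E_def by auto

lemma wheel_E_hub: "u \<in> wheel_V n \<Longrightarrow> u \<noteq> 0 \<Longrightarrow> wheel_E n u 0"
  unfolding wheel_E_def wheel_V_def by auto

theorem theorem9:
  fixes n :: nat and c0 :: "nat \<Rightarrow> int"
  assumes "n \<ge> 4"
  shows "\<exists>t p. p \<ge> 1 \<and>
           (\<forall>v \<in> wheel_V n. diffusion (wheel_V n) (wheel_E n) c0 (t + p) v
                            = diffusion (wheel_V n) (wheel_E n) c0 t v)"
proof -
  have fin: "finite (wheel_V n)" and hub: "0 \<in> wheel_V n"
    using assms by (auto simp: wheel_V_def)
  obtain K where "\<forall>t. \<forall>u\<in>wheel_V n. \<bar>diffusion (wheel_V n) (wheel_E n) c0 t u\<bar> \<le> K"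
    using diffusion_bounded[where E="wheel_E n", OF fin wheel_E_sym hub wheel_E_hub] by blast
  then show ?thesis
    using bounded_sequence_recurs[OF fin] by blast
qed

end
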